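(* Let $O = \{1,2,3,4\}^N$ be the set of ontic states of a system of $N$ elementary subsystems, and let $\mathcal{Q} = \{Q_1,\dots,Q_{2N}\}$ be a canonical set of $2N$ binary questions, with $Q_i$ identified with the partition $(M_{i,0}, M_{i,1})$ of $O$. Let $E \subseteq O$ be the ontic basis of a valid epistemic state which consists of known answers $a_i \in \{0,1\}$ to a subset $\mathcal{E} \subseteq \{1,\dots,2N\}$ of $k = |\mathcal{E}|$ of these questions, so that $E = \bigcap_{i \in \mathcal{E}} M_{i,a_i}$ is the set of ontic states compatible with these answers. Then $|E| = 2^{2N-k}$.
   Context: In Spekkens' toy theory, a system of $N$ elementary subsystems has ontic states $O=\{1,2,3,4\}^N$. A binary question "is the ontic state in $M_{0}$?" is identified with the partition $(M_0, O\setminus M_0)$ of $O$. A canonical set of questions is a set of binary questions such that every ontic state is uniquely specified by its answers; for $N$ elementary systems it consists of $2N$ questions. An epistemic state is specified by the answers to some of the questions of a canonical set, and its ontic basis is the set of ontic states compatible with these answers. An epistemic state is valid if it obeys the knowledge balance principle (at most half of the questions of a canonical set are answered), both globally and for the marginal on every subset of subsystems. *)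

theory Defs
  imports Main "HOL-Library.FuncSet"
begin

definition ontic_states :: "nat \<Rightarrow> (nat \<Rightarrow> nat) set" where
  "ontic_states N = {0..<N} \<rightarrow>\<^sub>E {1,2,3,4}"

text \<open>A binary question is given by the set M0 (answer 0); answer 1 is O - M0.
Questions are indexed by 0..<2N.  Canonical: every ontic state is uniquely determined
by its answers.\<close>
definition canonical_questions :: "nat \<Rightarrow> (nat \<Rightarrow> (nat \<Rightarrow> nat) set) \<Rightarrow> bool" where
  "canonical_questions N M \<longleftrightarrow>
     (\<forall>i<2*N. M i \<subseteq> ontic_states N) \<and>
     (\<forall>x\<in>ontic_states N. \<forall>y\<in>ontic_states N.
        (\<forall>i<2*N. (x \<in> M i \<longleftrightarrow> y \<in> M i)) \<longrightarrow> x = y)"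

definition answer_set :: "nat \<Rightarrow> (nat \<Rightarrow> (nat \<Rightarrow> nat) set) \<Rightarrow> nat \<Rightarrow> nat \<Rightarrow> (nat \<Rightarrow> nat) set" where
  "answer_set N M i a = (if a = 0 then M i else ontic_states N - M i)"

definition ontic_basis :: "nat \<Rightarrow> (nat \<Rightarrow> (nat \<Rightarrow> nat) set) \<Rightarrow> nat set \<Rightarrow> (nat \<Rightarrow> nat) \<Rightarrow> (nat \<Rightarrow> nat) set" where
  "ontic_basis N M Es a = {x \<in> ontic_states N. \<forall>i\<in>Es. x \<in> answer_set N M i (a i)}"

definition marginal :: "nat set \<Rightarrow> (nat \<Rightarrow> nat) set \<Rightarrow> (nat \<Rightarrow> nat) set" where
  "marginal S E = (\<lambda>x. restrict x S) ` E"

text \<open>For the marginal on a nonempty set S of subsystems: the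
maximal number of answered questions of a canonical set for S, namely
2|S| - log2 |marginal|, is at most |S|, i.e. the marginal ontic basis has at least
2^|S| elements.\<close>
definition valid_epistemic_state :: "nat \<Rightarrow> (nat \<Rightarrow> (nat \<Rightarrow> nat) set) \<Rightarrow> nat set \<Rightarrow> (nat \<Rightarrow> nat) \<Rightarrow> bool" where
  "valid_epistemic_state N M Es a \<longleftrightarrow>
     card Es \<le> N \<and>
     (\<forall>S. S \<subseteq> {0..<N} \<and> S \<noteq> {} \<longrightarrow>
        2 ^ card S \<le> card (marginal S (ontic_basis N M Es a)))"

end

theory Submission
  imports Defs
begin

text \<open>The answers to a canonical set of 2N questions identify an ontic state, so the answer
map embeds the 4^N ontic states into the 2^(2N) = 4^N answer vectors and is therefore a
bijection. Under it, the ontic basis of an epistemic state corresponds to the answer vectors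
with k prescribed coordinates, of which there are 2^(2N-k).\<close>

lemma card_PiE_fixed_coordinates:
  assumes "finite A" "Es \<subseteq> A" "b ` Es \<subseteq> B"
  shows "card {v \<in> A \<rightarrow>\<^sub>E B. \<forall>i\<in>Es. v i = b i} = card B ^ (card A - card Es)"
proof -
  let ?S = "{v \<in> A \<rightarrow>\<^sub>E B. \<forall>i\<in>Es. v i = b i}"
  have "bij_betw (\<lambda>v. restrict v (A - Es)) ?S ((A - Es) \<rightarrow>\<^sub>E B)"
  proof (rule bij_betw_byWitness[where f' = "\<lambda>w i. if i \<in> Es then b i else w i"])
    show "\<forall>v\<in>?S. (\<lambda>i. if i \<in> Es then b i else restrict v (A - Es) i) = v"
      using assms(2) by (auto simp: PiE_def extensional_def fun_eq_iff)
    show "\<forall>w\<in>(A - Es) \<rightarrow>\<^sub>E B. restrict (\<lambda>i. if i \<in> Es then b i else w i) (A - Es) = w"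
      by (auto simp: PiE_def extensional_def fun_eq_iff)
    show "(\<lambda>v. restrict v (A - Es)) ` ?S \<subseteq> (A - Es) \<rightarrow>\<^sub>E B"
      by auto
    show "(\<lambda>w i. if i \<in> Es then b i else w i) ` ((A - Es) \<rightarrow>\<^sub>E B) \<subseteq> ?S"
      using assms(2,3) by (fastforce simp: PiE_def Pi_def extensional_def)
  qed
  then have "card ?S = card B ^ card (A - Es)"
    by (simp add: bij_betw_same_card card_funcsetE assms(1))
  also have "card (A - Es) = card A - card Es"
    using assms(1,2) by (simp add: card_Diff_subset finite_subset)
  finally show ?thesis .
qed

lemma inj_on_card_eq_imp_bij_betw:
  assumes "inj_on f A" "f ` A \<subseteq> B" "finite B" "card A = card B"
  shows "bij_betw f A B"
  using assms card_subset_eq[of B "f ` A"] by (simp add: bij_betw_def card_image)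

lemma finite_ontic_states: "finite (ontic_states N)"
  by (simp add: ontic_states_def finite_PiE)

lemma card_ontic_states: "card (ontic_states N) = 4 ^ N"
  by (simp add: ontic_states_def card_funcsetE numeral_eq_Suc)

definition answer_vector :: "nat \<Rightarrow> (nat \<Rightarrow> (nat \<Rightarrow> nat) set) \<Rightarrow> (nat \<Rightarrow> nat) \<Rightarrow> nat \<Rightarrow> bool"
  where "answer_vector N M x = restrict (\<lambda>i. x \<in> M i) {0..<2*N}"

lemma inj_on_answer_vector:
  assumes "canonical_questions N M"
  shows "inj_on (answer_vector N M) (ontic_states N)"
proof (rule inj_onI)
  fix x y
  assume "x \<in> ontic_states N" "y \<in> ontic_states N" "answer_vector N M x = answer_vector N M y"
  moreover from \<open>answer_vector N M x = answer_vector N M y\<close>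
  have "\<forall>i<2*N. x \<in> M i \<longleftrightarrow> y \<in> M i"
    by (auto simp: answer_vector_def fun_eq_iff split: if_splits)
  ultimately show "x = y"
    using assms unfolding canonical_questions_def by blast
qed

lemma bij_betw_answer_vector:
  assumes "canonical_questions N M"
  shows "bij_betw (answer_vector N M) (ontic_states N) ({0..<2*N} \<rightarrow>\<^sub>E UNIV)"
proof (rule inj_on_card_eq_imp_bij_betw)
  show "inj_on (answer_vector N M) (ontic_states N)"
    using assms by (rule inj_on_answer_vector)
  show "answer_vector N M ` ontic_states N \<subseteq> {0..<2*N} \<rightarrow>\<^sub>E UNIV"
    by (auto simp: answer_vector_def)
  show "finite ({0..<2*N} \<rightarrow>\<^sub>E (UNIV :: bool set))"
    by (simp add: finite_PiE)
  show "card (ontic_states N) = card ({0..<2*N} \<rightarrow>\<^sub>E (UNIV :: bool set))"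
    by (simp add: card_ontic_states card_funcsetE power_mult)
qed

lemma ontic_basis_answer_vector:
  assumes "Es \<subseteq> {0..<2*N}" "\<forall>i\<in>Es. a i \<in> {0,1}"
  shows "ontic_basis N M Es a =
    {x \<in> ontic_states N. \<forall>i\<in>Es. answer_vector N M x i = (a i = 0)}"
  using assms by (force simp: ontic_basis_def answer_set_def answer_vector_def)

theorem mainTheorem2:
  fixes N :: nat and M :: "nat \<Rightarrow> (nat \<Rightarrow> nat) set"
    and Es :: "nat set" and a :: "nat \<Rightarrow> nat"
  assumes "canonical_questions N M"
    and "Es \<subseteq> {0..<2*N}"
    and "\<forall>i\<in>Es. a i \<in> {0,1}"
    and "valid_epistemic_state N M Es a"
  shows "card (ontic_basis N M Es a) = 2 ^ (2*N - card Es)"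
proof -
  let ?prescribed = "\<lambda>v. \<forall>i\<in>Es. v i = (a i = 0)"
  have "bij_betw (answer_vector N M) (ontic_basis N M Es a)
      {v \<in> {0..<2*N} \<rightarrow>\<^sub>E UNIV. ?prescribed v}"
    unfolding ontic_basis_answer_vector[OF assms(2,3)]
    by (rule bij_betw_Collect[OF bij_betw_answer_vector[OF assms(1)]]) simp
  then have "card (ontic_basis N M Es a) = card {v \<in> {0..<2*N} \<rightarrow>\<^sub>E UNIV. ?prescribed v}"
    by (rule bij_betw_same_card)
  also have "\<dots> = 2 ^ (2*N - card Es)"
    using card_PiE_fixed_coordinates[of "{0..<2*N}" Es "\<lambda>i. a i = 0" UNIV] assms(2)
    by simp
  finally show ?thesis .
qed

end
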